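(* Let $G$ be an infinite, connected, vertex-transitive, smallish graph in which every vertex has degree $k$, with a unit resistor on each edge. For every vertex $v$ of $G$ and every positive integer $r$, $$\sum_{j = v_r \sim v_{r-1} \sim \cdots \sim v_0 = v} R_{vj} \;=\; 2k^{r-1}\sum_{s=0}^{r-1}\frac{\Delta_s}{k^s},$$ where the sum on the left runs over all walks $v=v_0\sim v_1\sim\cdots\sim v_r=j$ of length $r$ starting at $v$ (vertices may repeat), and $j$ denotes the endpoint of the walk.
   Context: $x\sim y$ means $x$ and $y$ are adjacent. $R_{xy}$ denotes the effective electrical resistance between vertices $x,y$ when every edge carries unit resistance. $G$ is vertex transitive if for any two vertices there is a graph automorphism mapping one to the other. $G$ is smallish if it has bounded degree and possesses a sequence of finite subgraphs $G_m$ with $G_m\subseteq G_{m+1}$, $\bigcup_m G_m=G$, and $|\mathrm{boundary}(G_m)|/|G_m|\to 0$ as $m\to\infty$ (here $|G_m|$ is the number of vertices of $G_m$ and the boundary consists of the vertices of $G_m$ adjacent to vertices outside $G_m$). $\Delta_s$ denotes the number of walks of length $s$ (all walks, including those repeating vertices) that start and end at a given vertex (independent of the vertex by transitivity), with $\Delta_0=1$. *)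

theory Defs
  imports "HOL-Analysis.Analysis"
begin

text \<open>Simple graphs on the whole type 'a, given by a symmetric irreflexive
adjacency relation E.\<close>

definition simple_graph :: "('a \<Rightarrow> 'a \<Rightarrow> bool) \<Rightarrow> bool" where
  "simple_graph E \<longleftrightarrow> (\<forall>u v. E u v \<longrightarrow> E v u) \<and> (\<forall>u. \<not> E u u)"

definition regular_graph :: "('a \<Rightarrow> 'a \<Rightarrow> bool) \<Rightarrow> nat \<Rightarrow> bool" where
  "regular_graph E k \<longleftrightarrow> (\<forall>v. finite {u. E v u} \<and> card {u. E v u} = k)"

definition connected_graph :: "('a \<Rightarrow> 'a \<Rightarrow> bool) \<Rightarrow> bool" where
  "connected_graph E \<longleftrightarrow> (\<forall>v w. E\<^sup>*\<^sup>* v w)"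

definition graph_automorphism :: "('a \<Rightarrow> 'a \<Rightarrow> bool) \<Rightarrow> ('a \<Rightarrow> 'a) \<Rightarrow> bool" where
  "graph_automorphism E \<sigma> \<longleftrightarrow> bij \<sigma> \<and> (\<forall>u v. E u v \<longleftrightarrow> E (\<sigma> u) (\<sigma> v))"

definition vertex_transitive :: "('a \<Rightarrow> 'a \<Rightarrow> bool) \<Rightarrow> bool" where
  "vertex_transitive E \<longleftrightarrow> (\<forall>x y. \<exists>\<sigma>. graph_automorphism E \<sigma> \<and> \<sigma> x = y)"

definition boundary :: "('a \<Rightarrow> 'a \<Rightarrow> bool) \<Rightarrow> 'a set \<Rightarrow> 'a set" where
  "boundary E S = {x \<in> S. \<exists>y. y \<notin> S \<and> E x y}"

definition smallish :: "('a \<Rightarrow> 'a \<Rightarrow> bool) \<Rightarrow> bool" where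
  "smallish E \<longleftrightarrow>
     (\<exists>D. \<forall>v. finite {u. E v u} \<and> card {u. E v u} \<le> D) \<and>
     (\<exists>G :: nat \<Rightarrow> 'a set.
        (\<forall>m. finite (G m) \<and> G m \<noteq> {}) \<and> (\<forall>m. G m \<subseteq> G (Suc m)) \<and>
        (\<Union>m. G m) = UNIV \<and>
        (\<lambda>m. real (card (boundary E (G m))) / real (card (G m))) \<longlonglongrightarrow> 0)"

text \<open>Dirichlet energy of f (unit resistance on each edge; each undirected
edge counted once, hence the factor 1/2 over ordered pairs).\<close>
definition finite_energy :: "('a \<Rightarrow> 'a \<Rightarrow> bool) \<Rightarrow> ('a \<Rightarrow> real) \<Rightarrow> bool" where
  "finite_energy E f \<longleftrightarrow> (\<lambda>(u,v). (f u - f v)^2) summable_on {(u,v). E u v}"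

definition energy :: "('a \<Rightarrow> 'a \<Rightarrow> bool) \<Rightarrow> ('a \<Rightarrow> real) \<Rightarrow> real" where
  "energy E f = (1/2) * infsum (\<lambda>(u,v). (f u - f v)^2) {(u,v). E u v}"

text \<open>Effective resistance (free effective resistance, Dirichlet principle):
  R_xy = sup { (f x - f y)^2 : f of finite energy with energy at most 1 }.
  It coincides with the limit of effective resistances in any exhaustion by
  finite subgraphs.\<close>
definition eff_res :: "('a \<Rightarrow> 'a \<Rightarrow> bool) \<Rightarrow> 'a \<Rightarrow> 'a \<Rightarrow> real" where
  "eff_res E x y = Sup {(f x - f y)^2 | f. finite_energy E f \<and> energy E f \<le> 1}"

definition walks :: "('a \<Rightarrow> 'a \<Rightarrow> bool) \<Rightarrow> 'a \<Rightarrow> nat \<Rightarrow> 'a list set" where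
  "walks E v r = {ws. length ws = Suc r \<and> ws ! 0 = v \<and> (\<forall>i<r. E (ws ! i) (ws ! Suc i))}"

text \<open>Number of closed walks of length s at v (Delta_s).\<close>
definition closed_walks_count :: "('a \<Rightarrow> 'a \<Rightarrow> bool) \<Rightarrow> 'a \<Rightarrow> nat \<Rightarrow> nat" where
  "closed_walks_count E v s = card {ws \<in> walks E v s. last ws = v}"

end

theory Submission
  imports Defs
begin

text \<open>
  Effective resistances are computed through the potential \<open>w\<^sub>a\<^sub>b\<close> of a unit current from
  \<open>a\<close> to \<open>b\<close>, the Riesz representer of \<open>f \<mapsto> f a - f b\<close> for the Dirichlet form \<open>D\<close>; it is
  obtained by minimising the energy subject to \<open>f a - f b = 1\<close>, using that finite-energy functions
  modulo constants form a complete space. By Cauchy--Schwarz, \<open>R\<^sub>a\<^sub>b = D(w\<^sub>a\<^sub>b, w\<^sub>a\<^sub>b)\<close>.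
  Writing \<open>w\<^sub>j\<^sub>v = w\<^sub>j\<^sub>x + w\<^sub>x\<^sub>v\<close> and expanding \<open>D\<close>, then summing over the neighbours \<open>j\<close> of
  \<open>x\<close>, gives
  \<open>\<Sum>\<^sub>j\<^sub>\<sim>\<^sub>x R\<^sub>v\<^sub>j = k R\<^sub>v\<^sub>x + S - 2 + 2[x = v]\<close>, where \<open>S = \<Sum>\<^sub>j\<^sub>\<sim>\<^sub>x R\<^sub>x\<^sub>j\<close>
  does not depend on \<open>x\<close> by transitivity. By the maximum principle \<open>R\<^sub>v\<close> is \<open>1\<close>-Lipschitz, so
  summing its Laplacian \<open>S - 2\<close> over F{\o}lner sets avoiding \<open>v\<close> forces \<open>S = 2\<close> (Foster's
  theorem). The walk sums then satisfy \<open>W\<^sub>r\<^sub>+\<^sub>1 = k W\<^sub>r + 2 \<Delta>\<^sub>r\<close> with \<open>W\<^sub>0 = 0\<close>.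
\<close>

section \<open>The Dirichlet form\<close>

definition edges :: "('a \<Rightarrow> 'a \<Rightarrow> bool) \<Rightarrow> ('a \<times> 'a) set" where
  "edges E = {(u, v). E u v}"

definition grad :: "('a \<Rightarrow> real) \<Rightarrow> 'a \<times> 'a \<Rightarrow> real" where
  "grad f p = f (fst p) - f (snd p)"

definition dirichlet :: "('a \<Rightarrow> 'a \<Rightarrow> bool) \<Rightarrow> ('a \<Rightarrow> real) \<Rightarrow> ('a \<Rightarrow> real) \<Rightarrow> real" where
  "dirichlet E f g = (1/2) * infsum (\<lambda>p. grad f p * grad g p) (edges E)"

lemma grad_add [simp]: "grad (\<lambda>x. f x + g x) p = grad f p + grad g p"
  and grad_diff [simp]: "grad (\<lambda>x. f x - g x) p = grad f p - grad g p"
  and grad_scale [simp]: "grad (\<lambda>x. c * f x) p = c * grad f p"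
  and grad_const [simp]: "grad (\<lambda>x. c) p = 0"
  and grad_diff_const [simp]: "grad (\<lambda>x. f x - c) p = grad f p"
  by (simp_all add: grad_def algebra_simps)

lemma finite_energy_iff: "finite_energy E f \<longleftrightarrow> (\<lambda>p. (grad f p)\<^sup>2) summable_on edges E"
  by (simp add: finite_energy_def edges_def grad_def case_prod_unfold)

lemma energy_eq_dirichlet: "energy E f = dirichlet E f f"
  by (simp add: energy_def dirichlet_def edges_def grad_def case_prod_unfold power2_eq_square)

lemma power2_sum_le: "((x::real) + y)\<^sup>2 \<le> 2 * x\<^sup>2 + 2 * y\<^sup>2"
  using sum_squares_bound[of x y] by (simp add: power2_sum)

lemma finite_energy_add:
  assumes "finite_energy E f" "finite_energy E g"
  shows "finite_energy E (\<lambda>x. f x + g x)"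
  unfolding finite_energy_iff grad_add
proof (rule summable_on_comparison_test)
  show "(\<lambda>p. 2 * (grad f p)\<^sup>2 + 2 * (grad g p)\<^sup>2) summable_on edges E"
    using assms unfolding finite_energy_iff by (intro summable_on_add summable_on_cmult_right)
  show "(grad f p + grad g p)\<^sup>2 \<le> 2 * (grad f p)\<^sup>2 + 2 * (grad g p)\<^sup>2" for p
    by (rule power2_sum_le)
qed simp

lemma finite_energy_scale: "finite_energy E f \<Longrightarrow> finite_energy E (\<lambda>x. c * f x)"
  using summable_on_cmult_right[of "\<lambda>p. (grad f p)\<^sup>2" "edges E" "c\<^sup>2"]
  by (simp add: finite_energy_iff power_mult_distrib)

lemma finite_energy_diff:
  assumes "finite_energy E f" "finite_energy E g"
  shows "finite_energy E (\<lambda>x. f x - g x)"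
  using finite_energy_add[OF assms(1) finite_energy_scale[OF assms(2), of "-1"]] by simp

lemma finite_energy_const: "finite_energy E (\<lambda>x. c)"
  by (simp add: finite_energy_iff)

lemma summable_on_grad_mult:
  assumes "finite_energy E f" "finite_energy E g"
  shows "(\<lambda>p. grad f p * grad g p) summable_on edges E"
proof -
  have "(\<lambda>p. norm (grad f p * grad g p)) summable_on edges E"
  proof (rule summable_on_comparison_test)
    show "(\<lambda>p. (grad f p)\<^sup>2 + (grad g p)\<^sup>2) summable_on edges E"
      using assms unfolding finite_energy_iff by (rule summable_on_add)
    show "norm (grad f p * grad g p) \<le> (grad f p)\<^sup>2 + (grad g p)\<^sup>2" for p
    proof -
      have "2 * (\<bar>grad f p\<bar> * \<bar>grad g p\<bar>) \<le> (grad f p)\<^sup>2 + (grad g p)\<^sup>2"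
        using sum_squares_bound[of "\<bar>grad f p\<bar>" "\<bar>grad g p\<bar>"] by (simp add: mult.assoc)
      moreover have "0 \<le> \<bar>grad f p\<bar> * \<bar>grad g p\<bar>" by simp
      ultimately show ?thesis unfolding real_norm_def abs_mult by linarith
    qed
  qed simp
  then show ?thesis using summable_on_iff_abs_summable_on_real by blast
qed

lemma dirichlet_commute: "dirichlet E f g = dirichlet E g f"
  by (simp add: dirichlet_def mult.commute)

lemma dirichlet_nonneg: "0 \<le> dirichlet E f f"
  by (auto simp: dirichlet_def intro!: infsum_nonneg)

lemma dirichlet_const_left: "dirichlet E (\<lambda>x. c) g = 0"
  by (simp add: dirichlet_def)

lemma dirichlet_add_left:
  assumes "finite_energy E f" "finite_energy E g" "finite_energy E h"
  shows "dirichlet E (\<lambda>x. f x + g x) h = dirichlet E f h + dirichlet E g h"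
  using infsum_add[OF summable_on_grad_mult[OF assms(1,3)] summable_on_grad_mult[OF assms(2,3)]]
  by (simp add: dirichlet_def distrib_left distrib_right)

lemma dirichlet_scale_left: "dirichlet E (\<lambda>x. c * f x) h = c * dirichlet E f h"
  using infsum_cmult_right'[of c "\<lambda>p. grad f p * grad h p" "edges E"]
  by (simp add: dirichlet_def mult.assoc mult.left_commute)

lemma dirichlet_add_right:
  assumes "finite_energy E f" "finite_energy E g" "finite_energy E h"
  shows "dirichlet E h (\<lambda>x. f x + g x) = dirichlet E h f + dirichlet E h g"
  using dirichlet_add_left[OF assms] by (simp add: dirichlet_commute[of E h])

lemma dirichlet_scale_right: "dirichlet E h (\<lambda>x. c * f x) = c * dirichlet E h f"
  using dirichlet_scale_left[of E c f h] by (simp add: dirichlet_commute[of E h])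

lemma dirichlet_diff_left:
  assumes "finite_energy E f" "finite_energy E g" "finite_energy E h"
  shows "dirichlet E (\<lambda>x. f x - g x) h = dirichlet E f h - dirichlet E g h"
  using dirichlet_add_left[OF assms(1) finite_energy_scale[OF assms(2), of "-1"] assms(3)]
    dirichlet_scale_left[of E "-1" g h] by simp

lemma dirichlet_expand:
  assumes f: "finite_energy E f" and h: "finite_energy E h"
  shows "dirichlet E (\<lambda>x. f x + t * h x) (\<lambda>x. f x + t * h x)
    = dirichlet E f f + 2 * t * dirichlet E f h + t\<^sup>2 * dirichlet E h h"
proof -
  have th: "finite_energy E (\<lambda>x. t * h x)" by (rule finite_energy_scale[OF h])
  have fth: "finite_energy E (\<lambda>x. f x + t * h x)" by (rule finite_energy_add[OF f th])
  show ?thesis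
    using dirichlet_add_left[OF f th fth] dirichlet_add_right[OF f th f] dirichlet_add_right[OF f th h]
      dirichlet_commute[of E h f]
    by (simp add: dirichlet_scale_left dirichlet_scale_right algebra_simps power2_eq_square)
qed

lemma dirichlet_scale_both: "dirichlet E (\<lambda>x. c * f x) (\<lambda>x. c * f x) = c\<^sup>2 * dirichlet E f f"
  by (simp add: dirichlet_scale_left dirichlet_scale_right power2_eq_square)

lemma dirichlet_diff_const: "dirichlet E (\<lambda>x. f x - c) (\<lambda>x. f x - c) = dirichlet E f f"
  by (simp add: dirichlet_def)

lemma discriminant_le_if_quadratic_nonneg:
  fixes a b c :: real
  assumes nonneg: "\<And>t. 0 \<le> a - 2 * t * b + t\<^sup>2 * c" and "0 \<le> c"
  shows "b\<^sup>2 \<le> a * c"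
proof (cases "c = 0")
  case True
  have "b = 0"
  proof (rule ccontr)
    assume "b \<noteq> 0"
    with nonneg[of "(a + 1) / (2 * b)"] True show False by (simp add: field_simps)
  qed
  with True show ?thesis by simp
next
  case False
  with \<open>0 \<le> c\<close> have c: "c > 0" by simp
  have "0 \<le> a - 2 * (b / c) * b + (b / c)\<^sup>2 * c" by (rule nonneg)
  also have "\<dots> = (a * c - b\<^sup>2) / c" using c by (simp add: field_simps power2_eq_square)
  finally show ?thesis using c by (simp add: zero_le_divide_iff)
qed

lemma dirichlet_Cauchy_Schwarz:
  assumes f: "finite_energy E f" and g: "finite_energy E g"
  shows "(dirichlet E f g)\<^sup>2 \<le> dirichlet E f f * dirichlet E g g"
proof (rule discriminant_le_if_quadratic_nonneg)
  fix t :: real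
  have "0 \<le> dirichlet E (\<lambda>x. f x + (- t) * g x) (\<lambda>x. f x + (- t) * g x)"
    by (rule dirichlet_nonneg)
  also have "\<dots> = dirichlet E f f + 2 * (- t) * dirichlet E f g + (- t)\<^sup>2 * dirichlet E g g"
    by (rule dirichlet_expand[OF f g])
  finally show "0 \<le> dirichlet E f f - 2 * t * dirichlet E f g + t\<^sup>2 * dirichlet E g g"
    by simp
qed (rule dirichlet_nonneg)

lemma dirichlet_triangle:
  assumes f: "finite_energy E f" and g: "finite_energy E g"
  shows "dirichlet E (\<lambda>x. f x + g x) (\<lambda>x. f x + g x) \<le> (sqrt (dirichlet E f f) + sqrt (dirichlet E g g))\<^sup>2"
proof -
  have "(dirichlet E f g)\<^sup>2 \<le> (sqrt (dirichlet E f f) * sqrt (dirichlet E g g))\<^sup>2"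
    using dirichlet_Cauchy_Schwarz[OF f g] dirichlet_nonneg[of E f] dirichlet_nonneg[of E g]
    by (simp add: power_mult_distrib)
  then have fg: "dirichlet E f g \<le> sqrt (dirichlet E f f) * sqrt (dirichlet E g g)"
    by (rule power2_le_imp_le) (simp add: dirichlet_nonneg)
  have "dirichlet E (\<lambda>x. f x + g x) (\<lambda>x. f x + g x)
      = dirichlet E (\<lambda>x. f x + 1 * g x) (\<lambda>x. f x + 1 * g x)" by simp
  also have "\<dots> = dirichlet E f f + 2 * dirichlet E f g + dirichlet E g g"
    using dirichlet_expand[OF f g, of 1] by simp
  also have "\<dots> \<le> dirichlet E f f + 2 * (sqrt (dirichlet E f f) * sqrt (dirichlet E g g)) + dirichlet E g g"
    using fg by linarith
  also have "\<dots> = (sqrt (dirichlet E f f) + sqrt (dirichlet E g g))\<^sup>2"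
    using dirichlet_nonneg[of E f] dirichlet_nonneg[of E g] by (simp add: power2_sum)
  finally show ?thesis .
qed

section \<open>Energy estimates on a graph\<close>

definition neighbours :: "('a \<Rightarrow> 'a \<Rightarrow> bool) \<Rightarrow> 'a \<Rightarrow> 'a set" where
  "neighbours E x = {y. E x y}"

lemma simple_graph_sym: "simple_graph E \<Longrightarrow> E u v \<Longrightarrow> E v u"
  and simple_graph_irrefl: "simple_graph E \<Longrightarrow> \<not> E u u"
  by (auto simp: simple_graph_def)

lemma sq_diff_le_dirichlet_if_edge:
  assumes sg: "simple_graph E" and f: "finite_energy E f" and e: "E x y"
  shows "(f x - f y)\<^sup>2 \<le> dirichlet E f f"
proof -
  have xy: "x \<noteq> y" using e simple_graph_irrefl[OF sg] by blast
  have S: "{(x, y), (y, x)} \<subseteq> edges E"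
    using e simple_graph_sym[OF sg e] by (auto simp: edges_def)
  have "sum (\<lambda>p. (grad f p)\<^sup>2) {(x, y), (y, x)} \<le> infsum (\<lambda>p. (grad f p)\<^sup>2) (edges E)"
    using f S by (intro finite_sum_le_infsum) (auto simp: finite_energy_iff)
  moreover have "sum (\<lambda>p. (grad f p)\<^sup>2) {(x, y), (y, x)} = 2 * (f x - f y)\<^sup>2"
    using xy by (simp add: grad_def power2_commute)
  ultimately show ?thesis by (simp add: dirichlet_def power2_eq_square)
qed

lemma sq_diff_le_dirichlet_if_path:
  assumes sg: "simple_graph E" and path: "E\<^sup>*\<^sup>* a b"
  obtains C where "0 \<le> C" "\<And>f. finite_energy E f \<Longrightarrow> (f a - f b)\<^sup>2 \<le> C * dirichlet E f f"
proof -
  from path have "\<exists>C\<ge>0. \<forall>f. finite_energy E f \<longrightarrow> (f a - f b)\<^sup>2 \<le> C * dirichlet E f f"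
  proof (induction rule: rtranclp_induct)
    case base
    show ?case by (auto intro: exI[of _ 0])
  next
    case (step c d)
    then obtain C where "0 \<le> C" and C: "\<And>f. finite_energy E f \<Longrightarrow> (f a - f c)\<^sup>2 \<le> C * dirichlet E f f"
      by blast
    have "(f a - f d)\<^sup>2 \<le> (2 * C + 2) * dirichlet E f f" if f: "finite_energy E f" for f
    proof -
      have "(f a - f d)\<^sup>2 \<le> 2 * (f a - f c)\<^sup>2 + 2 * (f c - f d)\<^sup>2"
        using power2_sum_le[of "f a - f c" "f c - f d"] by simp
      also have "\<dots> \<le> (2 * C + 2) * dirichlet E f f"
        using C[OF f] sq_diff_le_dirichlet_if_edge[OF sg f step(2)] by (simp add: algebra_simps)
      finally show ?thesis .
    qed
    with \<open>0 \<le> C\<close> show ?case by (intro exI[of _ "2 * C + 2"]) auto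
  qed
  then show ?thesis using that by blast
qed

lemma const_if_dirichlet_eq_0:
  assumes sg: "simple_graph E" and f: "finite_energy E f" and zero: "dirichlet E f f = 0"
    and path: "E\<^sup>*\<^sup>* a b"
  shows "f a = f b"
proof -
  obtain C where "\<And>f. finite_energy E f \<Longrightarrow> (f a - f b)\<^sup>2 \<le> C * dirichlet E f f"
    using sq_diff_le_dirichlet_if_path[OF sg path] by blast
  from this[OF f] zero show ?thesis by simp
qed

lemma indicator_edges_finite_support:
  assumes sg: "simple_graph E" and fin: "finite (neighbours E x)"
  obtains S where "finite S" "S \<subseteq> edges E"
    "\<And>p. p \<in> edges E - S \<Longrightarrow> grad (indicator {x} :: 'a \<Rightarrow> real) p = 0"
proof
  let ?S = "Pair x ` neighbours E x \<union> (\<lambda>y. (y, x)) ` neighbours E x"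
  show "finite ?S" using fin by simp
  show "?S \<subseteq> edges E" using simple_graph_sym[OF sg] by (auto simp: edges_def neighbours_def)
  show "grad (indicator {x} :: 'a \<Rightarrow> real) p = 0" if "p \<in> edges E - ?S" for p
    using that simple_graph_sym[OF sg]
    by (cases p) (auto simp: edges_def grad_def neighbours_def split: split_indicator)
qed

lemma finite_energy_indicator:
  assumes sg: "simple_graph E" and fin: "finite (neighbours E x)"
  shows "finite_energy E (indicator {x})"
proof -
  obtain S where S: "finite S" "S \<subseteq> edges E"
    and zero: "\<And>p. p \<in> edges E - S \<Longrightarrow> grad (indicator {x} :: 'a \<Rightarrow> real) p = 0"
    using indicator_edges_finite_support[OF sg fin] by blast
  have "(\<lambda>p. (grad (indicator {x} :: 'a \<Rightarrow> real) p)\<^sup>2) summable_on S" using S(1) by simp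
  moreover have "(\<lambda>p. (grad (indicator {x} :: 'a \<Rightarrow> real) p)\<^sup>2) summable_on edges E
      \<longleftrightarrow> (\<lambda>p. (grad (indicator {x} :: 'a \<Rightarrow> real) p)\<^sup>2) summable_on S"
    by (rule summable_on_cong_neutral) (use S zero in auto)
  ultimately show ?thesis by (simp add: finite_energy_iff)
qed

lemma dirichlet_indicator:
  assumes sg: "simple_graph E" and fin: "finite (neighbours E x)"
  shows "dirichlet E f (indicator {x}) = (\<Sum>y\<in>neighbours E x. f x - f y)"
proof -
  let ?out = "Pair x ` neighbours E x" and ?inc = "(\<lambda>y. (y, x)) ` neighbours E x"
  let ?t = "\<lambda>p. grad f p * grad (indicator {x}) p"
  have x: "x \<notin> neighbours E x" using simple_graph_irrefl[OF sg] by (auto simp: neighbours_def)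
  have "infsum ?t (edges E) = infsum ?t (?out \<union> ?inc)"
    by (rule infsum_cong_neutral)
      (use simple_graph_sym[OF sg] in \<open>auto simp: edges_def grad_def neighbours_def split: split_indicator\<close>)
  also have "\<dots> = sum ?t ?out + sum ?t ?inc"
    using fin x by (subst infsum_finite) (auto intro: sum.union_disjoint)
  also have "sum ?t ?out = (\<Sum>y\<in>neighbours E x. f x - f y)"
    using x by (subst sum.reindex) (auto simp: inj_on_def grad_def intro!: sum.cong split: split_indicator)
  also have "sum ?t ?inc = (\<Sum>y\<in>neighbours E x. f x - f y)"
    using x by (subst sum.reindex) (auto simp: inj_on_def grad_def intro!: sum.cong split: split_indicator)
  finally show ?thesis by (simp add: dirichlet_def)
qed

lemma convergent_if_sq_diff_le:
  fixes X :: "nat \<Rightarrow> real"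
  assumes le: "\<And>m n. (X m - X n)\<^sup>2 \<le> \<delta> m + \<delta> n" and \<delta>: "\<delta> \<longlonglongrightarrow> 0"
  shows "convergent X"
  unfolding Cauchy_convergent_iff[symmetric]
proof (rule CauchyI)
  fix e :: real
  assume "0 < e"
  then have "eventually (\<lambda>n. \<delta> n < e\<^sup>2 / 2) sequentially"
    by (intro order_tendstoD(2)[OF \<delta>]) simp
  then obtain M where M: "\<And>n. M \<le> n \<Longrightarrow> \<delta> n < e\<^sup>2 / 2"
    by (auto simp: eventually_sequentially)
  have "\<bar>X m - X n\<bar> < e" if "M \<le> m" "M \<le> n" for m n
  proof (rule power2_less_imp_less)
    show "\<bar>X m - X n\<bar>\<^sup>2 < e\<^sup>2" using le[of m n] M[OF that(1)] M[OF that(2)] by simp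
  qed (use \<open>0 < e\<close> in simp)
  then show "\<exists>M. \<forall>m\<ge>M. \<forall>n\<ge>M. norm (X m - X n) < e" by auto
qed

lemma dirichlet_le_if_pointwise_limit:
  assumes lim: "\<And>x. (\<lambda>n. F n x) \<longlonglongrightarrow> f x" and fe: "\<And>n. finite_energy E (F n)"
    and le: "\<And>n. dirichlet E (F n) (F n) \<le> c n" and c: "c \<longlonglongrightarrow> c0"
  shows "finite_energy E f" and "dirichlet E f f \<le> c0"
proof -
  have partial: "sum (\<lambda>p. (grad f p)\<^sup>2) S \<le> 2 * c0" if S: "finite S" "S \<subseteq> edges E" for S
  proof (rule tendsto_le[OF trivial_limit_sequentially])
    show "(\<lambda>n. sum (\<lambda>p. (grad (F n) p)\<^sup>2) S) \<longlonglongrightarrow> sum (\<lambda>p. (grad f p)\<^sup>2) S"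
      unfolding grad_def by (intro tendsto_intros lim)
    show "(\<lambda>n. 2 * c n) \<longlonglongrightarrow> 2 * c0" by (intro tendsto_intros c)
    have "sum (\<lambda>p. (grad (F n) p)\<^sup>2) S \<le> 2 * c n" for n
    proof -
      have "sum (\<lambda>p. (grad (F n) p)\<^sup>2) S \<le> infsum (\<lambda>p. (grad (F n) p)\<^sup>2) (edges E)"
        using fe[of n] S by (intro finite_sum_le_infsum) (auto simp: finite_energy_iff)
      also have "\<dots> = 2 * dirichlet E (F n) (F n)" by (simp add: dirichlet_def power2_eq_square)
      finally show ?thesis using le[of n] by simp
    qed
    then show "\<forall>\<^sub>F n in sequentially. sum (\<lambda>p. (grad (F n) p)\<^sup>2) S \<le> 2 * c n" by simp
  qed
  have summable: "(\<lambda>p. (grad f p)\<^sup>2) summable_on edges E"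
    using partial by (intro nonneg_bdd_above_summable_on bdd_aboveI2) auto
  then show "finite_energy E f" by (simp add: finite_energy_iff)
  have "infsum (\<lambda>p. (grad f p)\<^sup>2) (edges E) \<le> 2 * c0"
    using summable partial by (rule infsum_le_finite_sums)
  then show "dirichlet E f f \<le> c0" by (simp add: dirichlet_def power2_eq_square)
qed

text \<open>Completeness of the space of finite-energy functions modulo constants.\<close>

lemma dirichlet_Cauchy_limit:
  assumes sg: "simple_graph E" and conn: "\<And>x. E\<^sup>*\<^sup>* x b"
    and fe: "\<And>n. finite_energy E (g n)" and base: "\<And>n. g n b = 0"
    and Cauchy: "\<And>m n. dirichlet E (\<lambda>x. g m x - g n x) (\<lambda>x. g m x - g n x) \<le> \<delta> m + \<delta> n"
    and \<delta>: "\<delta> \<longlonglongrightarrow> 0"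
  obtains u where "\<And>x. (\<lambda>n. g n x) \<longlonglongrightarrow> u x" "finite_energy E u"
    "\<And>n. dirichlet E (\<lambda>x. u x - g n x) (\<lambda>x. u x - g n x) \<le> \<delta> n"
proof -
  have "convergent (\<lambda>n. g n x)" for x
  proof -
    obtain C where "0 \<le> C" and C: "\<And>f. finite_energy E f \<Longrightarrow> (f x - f b)\<^sup>2 \<le> C * dirichlet E f f"
      using sq_diff_le_dirichlet_if_path[OF sg conn] by blast
    show ?thesis
    proof (rule convergent_if_sq_diff_le)
      show "(g m x - g n x)\<^sup>2 \<le> C * \<delta> m + C * \<delta> n" for m n
        using C[OF finite_energy_diff[OF fe fe], of m n] mult_left_mono[OF Cauchy \<open>0 \<le> C\<close>, of m n]
        by (simp add: base distrib_left)
      show "(\<lambda>n. C * \<delta> n) \<longlonglongrightarrow> 0" using tendsto_mult_right_zero[OF \<delta>] by simp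
    qed
  qed
  then have lim: "(\<lambda>n. g n x) \<longlonglongrightarrow> lim (\<lambda>n. g n x)" for x
    by (simp add: convergent_LIMSEQ_iff)
  define u where "u x = lim (\<lambda>n. g n x)" for x
  have diff: "finite_energy E (\<lambda>x. u x - g n x)"
    "dirichlet E (\<lambda>x. u x - g n x) (\<lambda>x. u x - g n x) \<le> \<delta> n" for n
  proof -
    have "(\<lambda>k. g k x - g n x) \<longlonglongrightarrow> u x - g n x" for x
      unfolding u_def by (intro tendsto_diff lim tendsto_const)
    moreover have "(\<lambda>k. \<delta> k + \<delta> n) \<longlonglongrightarrow> 0 + \<delta> n"
      by (intro tendsto_add \<delta> tendsto_const)
    ultimately show "finite_energy E (\<lambda>x. u x - g n x)"
      "dirichlet E (\<lambda>x. u x - g n x) (\<lambda>x. u x - g n x) \<le> \<delta> n"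
      using dirichlet_le_if_pointwise_limit[of "\<lambda>k x. g k x - g n x" "\<lambda>x. u x - g n x" E "\<lambda>k. \<delta> k + \<delta> n"]
        finite_energy_diff[OF fe fe] Cauchy by simp_all
  qed
  have "finite_energy E (\<lambda>x. (u x - g 0 x) + g 0 x)" by (rule finite_energy_add[OF diff(1) fe])
  then have "finite_energy E u" by simp
  show ?thesis
  proof (rule that)
    show "(\<lambda>n. g n x) \<longlonglongrightarrow> u x" for x using lim by (simp add: u_def)
  qed (use \<open>finite_energy E u\<close> diff(2) in auto)
qed

lemma dirichlet_parallelogram_bound:
  assumes f: "finite_energy E f" and g: "finite_energy E g"
    and fab: "f a - f b = 1" and gab: "g a - g b = 1"
    and minimal: "\<And>h. finite_energy E h \<Longrightarrow> h a - h b = 1 \<Longrightarrow> m \<le> dirichlet E h h"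
  shows "dirichlet E (\<lambda>x. f x - g x) (\<lambda>x. f x - g x) \<le> 2 * dirichlet E f f + 2 * dirichlet E g g - 4 * m"
proof -
  have "m \<le> dirichlet E (\<lambda>x. (1/2) * (f x + g x)) (\<lambda>x. (1/2) * (f x + g x))"
    using fab gab by (intro minimal finite_energy_scale finite_energy_add f g) (simp add: algebra_simps)
  also have "\<dots> = (1/4) * dirichlet E (\<lambda>x. f x + g x) (\<lambda>x. f x + g x)"
    unfolding dirichlet_scale_both by (simp add: power2_eq_square)
  finally have "4 * m \<le> dirichlet E (\<lambda>x. f x + g x) (\<lambda>x. f x + g x)" by simp
  moreover have "dirichlet E (\<lambda>x. f x - g x) (\<lambda>x. f x - g x) + dirichlet E (\<lambda>x. f x + g x) (\<lambda>x. f x + g x)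
      = 2 * dirichlet E f f + 2 * dirichlet E g g"
    using dirichlet_expand[OF f g, of 1] dirichlet_expand[OF f g, of "-1"] by simp
  ultimately show ?thesis by linarith
qed

lemma dirichlet_le_if_approximated:
  assumes u: "finite_energy E u" and g: "\<And>n. finite_energy E (g n)" and "0 \<le> m"
    and gm: "\<And>n. dirichlet E (g n) (g n) \<le> m + \<delta> n"
    and near: "\<And>n. dirichlet E (\<lambda>x. u x - g n x) (\<lambda>x. u x - g n x) \<le> \<delta> n"
    and \<delta>: "\<delta> \<longlonglongrightarrow> 0"
  shows "dirichlet E u u \<le> m"
proof -
  have bound: "dirichlet E u u \<le> (sqrt (m + \<delta> n) + sqrt (\<delta> n))\<^sup>2" for n
  proof -
    have "dirichlet E u u \<le> (sqrt (dirichlet E (g n) (g n))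
        + sqrt (dirichlet E (\<lambda>x. u x - g n x) (\<lambda>x. u x - g n x)))\<^sup>2"
      using dirichlet_triangle[OF g[of n] finite_energy_diff[OF u g[of n]]] by simp
    also have "\<dots> \<le> (sqrt (m + \<delta> n) + sqrt (\<delta> n))\<^sup>2"
      using gm[of n] near[of n] dirichlet_nonneg[of E "g n"] dirichlet_nonneg[of E "\<lambda>x. u x - g n x"]
      by (intro power_mono add_mono real_sqrt_le_mono) auto
    finally show ?thesis .
  qed
  have "(\<lambda>n. (sqrt (m + \<delta> n) + sqrt (\<delta> n))\<^sup>2) \<longlonglongrightarrow> (sqrt (m + 0) + sqrt 0)\<^sup>2"
    by (intro tendsto_intros \<delta>)
  then have "dirichlet E u u \<le> (sqrt (m + 0) + sqrt 0)\<^sup>2"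
    by (rule tendsto_le[OF trivial_limit_sequentially _ tendsto_const]) (use bound in simp)
  with \<open>0 \<le> m\<close> show ?thesis by simp
qed

lemma dirichlet_minimizer_exists:
  assumes sg: "simple_graph E" and conn: "\<And>x. E\<^sup>*\<^sup>* x b"
    and f0: "finite_energy E f0" "f0 a - f0 b = 1"
  obtains u where "finite_energy E u" "u a - u b = 1"
    "\<And>f. finite_energy E f \<Longrightarrow> f a - f b = 1 \<Longrightarrow> dirichlet E u u \<le> dirichlet E f f"
proof -
  define A where "A = {f. finite_energy E f \<and> f a - f b = 1}"
  define m where "m = (INF f\<in>A. dirichlet E f f)"
  have bdd: "bdd_below ((\<lambda>f. dirichlet E f f) ` A)"
    by (auto intro!: bdd_belowI[of _ 0] dirichlet_nonneg)
  have m_le: "m \<le> dirichlet E f f" if "finite_energy E f" "f a - f b = 1" for f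
    unfolding m_def using that by (intro cINF_lower[OF bdd]) (simp add: A_def)
  have "\<exists>f\<in>A. dirichlet E f f < m + 1 / real (Suc n)" for n
    using cInf_lessD[of "(\<lambda>f. dirichlet E f f) ` A" "m + 1 / real (Suc n)"] f0
    unfolding m_def A_def by auto
  then obtain F where F: "\<And>n. F n \<in> A" "\<And>n. dirichlet E (F n) (F n) < m + 1 / real (Suc n)"
    by metis
  define g where "g n = (\<lambda>x. F n x - F n b)" for n
  have g: "finite_energy E (g n)" "g n a - g n b = 1" "g n b = 0"
    "dirichlet E (g n) (g n) < m + 1 / real (Suc n)" for n
    using F[of n] by (auto simp: A_def g_def finite_energy_diff finite_energy_const dirichlet_diff_const)
  have Cauchy: "dirichlet E (\<lambda>x. g k x - g n x) (\<lambda>x. g k x - g n x) \<le> 2 / real (Suc k) + 2 / real (Suc n)"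
    for k n
    using dirichlet_parallelogram_bound[OF g(1,1,2,2) m_le, of k n] g(4)[of k] g(4)[of n] by simp
  have zero: "(\<lambda>n. c / real (Suc n)) \<longlonglongrightarrow> 0" for c :: real
    using LIMSEQ_Suc[OF lim_const_over_n[of c]] by simp
  obtain u where lim: "\<And>x. (\<lambda>n. g n x) \<longlonglongrightarrow> u x" and u: "finite_energy E u"
    and near: "\<And>n. dirichlet E (\<lambda>x. u x - g n x) (\<lambda>x. u x - g n x) \<le> 2 / real (Suc n)"
    using dirichlet_Cauchy_limit[OF sg conn g(1) g(3) Cauchy zero] by blast
  have "(\<lambda>n. g n a - g n b) \<longlonglongrightarrow> u a - u b" by (intro tendsto_diff lim)
  then have uab: "u a - u b = 1" using g(2) by (simp add: LIMSEQ_const_iff)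
  moreover have "0 \<le> m"
    unfolding m_def using f0 by (intro cINF_greatest) (auto simp: A_def dirichlet_nonneg)
  moreover have "dirichlet E (g n) (g n) \<le> m + 2 / real (Suc n)" for n
    using g(4)[of n] by (simp add: field_simps)
  ultimately have "dirichlet E u u \<le> m"
    using dirichlet_le_if_approximated[OF u g(1) _ _ near zero] by blast
  with u uab m_le show ?thesis using that by fastforce
qed

section \<open>Unit-current potentials and effective resistance\<close>

definition unit_current_potential :: "('a \<Rightarrow> 'a \<Rightarrow> bool) \<Rightarrow> 'a \<Rightarrow> 'a \<Rightarrow> ('a \<Rightarrow> real) \<Rightarrow> bool" where
  "unit_current_potential E a b w \<longleftrightarrow>
     finite_energy E w \<and> (\<forall>f. finite_energy E f \<longrightarrow> dirichlet E f w = f a - f b)"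

lemma dirichlet_orthogonal_if_minimizer:
  assumes u: "finite_energy E u" "u a - u b = 1"
    and minimal: "\<And>f. finite_energy E f \<Longrightarrow> f a - f b = 1 \<Longrightarrow> dirichlet E u u \<le> dirichlet E f f"
    and h: "finite_energy E h" "h a = h b"
  shows "dirichlet E u h = 0"
proof -
  have "(- dirichlet E u h)\<^sup>2 \<le> 0 * dirichlet E h h"
  proof (rule discriminant_le_if_quadratic_nonneg)
    fix t :: real
    have "dirichlet E u u \<le> dirichlet E (\<lambda>x. u x + t * h x) (\<lambda>x. u x + t * h x)"
      using u h by (intro minimal finite_energy_add finite_energy_scale) auto
    then show "0 \<le> 0 - 2 * t * (- dirichlet E u h) + t\<^sup>2 * dirichlet E h h"
      unfolding dirichlet_expand[OF u(1) h(1)] by simp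
  qed (rule dirichlet_nonneg)
  then show ?thesis by simp
qed

lemma unit_current_potential_of_minimizer:
  assumes sg: "simple_graph E" and path: "E\<^sup>*\<^sup>* a b"
    and u: "finite_energy E u" "u a - u b = 1"
    and minimal: "\<And>f. finite_energy E f \<Longrightarrow> f a - f b = 1 \<Longrightarrow> dirichlet E u u \<le> dirichlet E f f"
  shows "unit_current_potential E a b (\<lambda>x. inverse (dirichlet E u u) * u x)"
proof -
  obtain C where "\<And>f. finite_energy E f \<Longrightarrow> (f a - f b)\<^sup>2 \<le> C * dirichlet E f f"
    using sq_diff_le_dirichlet_if_path[OF sg path] by blast
  from this[OF u(1)] u(2) have pos: "dirichlet E u u \<noteq> 0" by auto
  have flux: "dirichlet E f u = (f a - f b) * dirichlet E u u" if f: "finite_energy E f" for f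
  proof -
    let ?h = "\<lambda>x. f x - (f a - f b) * u x"
    have h: "finite_energy E ?h" by (intro finite_energy_diff finite_energy_scale f u)
    have "?h a - ?h b = (f a - f b) * (1 - (u a - u b))" by (simp add: algebra_simps)
    also have "\<dots> = 0" using u(2) by simp
    finally have "?h a = ?h b" by simp
    with u minimal h have "dirichlet E u ?h = 0" by (rule dirichlet_orthogonal_if_minimizer)
    moreover have "dirichlet E ?h u = dirichlet E f u - (f a - f b) * dirichlet E u u"
      using dirichlet_diff_left[OF f finite_energy_scale[OF u(1)] u(1)]
        dirichlet_scale_left[of E "f a - f b" u u] by simp
    ultimately show ?thesis using dirichlet_commute[of E u ?h] by simp
  qed
  show ?thesis
    unfolding unit_current_potential_def
  proof (intro conjI allI impI)
    show "finite_energy E (\<lambda>x. inverse (dirichlet E u u) * u x)" by (rule finite_energy_scale[OF u(1)])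
    fix f
    assume "finite_energy E f"
    with pos show "dirichlet E f (\<lambda>x. inverse (dirichlet E u u) * u x) = f a - f b"
      by (simp add: dirichlet_scale_right flux)
  qed
qed

lemma unit_current_potential_zero: "unit_current_potential E a a (\<lambda>x. 0)"
  using dirichlet_const_left[of E 0]
  by (simp add: unit_current_potential_def finite_energy_const dirichlet_commute[of E _ "\<lambda>x. 0"])

lemma unit_current_potential_exists:
  assumes sg: "simple_graph E" and fin: "\<And>x. finite (neighbours E x)" and conn: "\<And>x y. E\<^sup>*\<^sup>* x y"
  shows "\<exists>w. unit_current_potential E a b w"
proof (cases "a = b")
  case True
  then show ?thesis using unit_current_potential_zero[of E a] by blast
next
  case False
  then have "finite_energy E (indicator {a})" "indicator {a} a - indicator {a} b = (1::real)"
    using finite_energy_indicator[OF sg fin] by auto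
  then obtain u where "finite_energy E u" "u a - u b = 1"
    "\<And>f. finite_energy E f \<Longrightarrow> f a - f b = 1 \<Longrightarrow> dirichlet E u u \<le> dirichlet E f f"
    using dirichlet_minimizer_exists[OF sg conn] by blast
  then show ?thesis using unit_current_potential_of_minimizer[OF sg conn] by blast
qed

lemma unit_current_potential_self:
  "unit_current_potential E a b w \<Longrightarrow> dirichlet E w w = w a - w b"
  by (simp add: unit_current_potential_def)

text \<open>Dirichlet's principle: by Cauchy--Schwarz the supremum defining \<open>eff_res\<close> is attained at
  the normalised unit-current potential.\<close>

lemma eff_res_eq_dirichlet:
  assumes w: "unit_current_potential E a b w"
  shows "eff_res E a b = dirichlet E w w"
  unfolding eff_res_def
proof (rule cSup_eq_maximum)
  have wfe: "finite_energy E w" using w by (simp add: unit_current_potential_def)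
  show "dirichlet E w w \<in> {(f a - f b)\<^sup>2 | f. finite_energy E f \<and> energy E f \<le> 1}"
  proof (cases "dirichlet E w w = 0")
    case True
    then show ?thesis
      by (intro CollectI exI[of _ "\<lambda>x. 0"]) (simp add: finite_energy_const energy_eq_dirichlet dirichlet_const_left)
  next
    case False
    then have d: "0 < dirichlet E w w" using dirichlet_nonneg[of E w] by simp
    define c where "c = inverse (sqrt (dirichlet E w w))"
    have c2: "c\<^sup>2 = inverse (dirichlet E w w)" using d by (simp add: c_def power_inverse)
    have "energy E (\<lambda>x. c * w x) = c\<^sup>2 * dirichlet E w w"
      by (simp only: energy_eq_dirichlet dirichlet_scale_both)
    also have "\<dots> = 1" using d unfolding c2 by simp
    moreover have "(c * w a - c * w b)\<^sup>2 = c\<^sup>2 * (w a - w b)\<^sup>2"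
      by (simp add: power_mult_distrib right_diff_distrib[symmetric])
    moreover have "\<dots> = dirichlet E w w"
      using unit_current_potential_self[OF w] d unfolding c2 by (simp add: power2_eq_square)
    ultimately show ?thesis
      using finite_energy_scale[OF wfe] by (intro CollectI exI[of _ "\<lambda>x. c * w x"]) auto
  qed
next
  fix z
  assume "z \<in> {(f a - f b)\<^sup>2 | f. finite_energy E f \<and> energy E f \<le> 1}"
  then obtain f where z: "z = (f a - f b)\<^sup>2" and f: "finite_energy E f" "energy E f \<le> 1" by blast
  have "z = (dirichlet E f w)\<^sup>2" using z w f(1) by (simp add: unit_current_potential_def)
  also have "\<dots> \<le> dirichlet E f f * dirichlet E w w"
    using dirichlet_Cauchy_Schwarz[OF f(1) w[unfolded unit_current_potential_def, THEN conjunct1]] .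
  also have "\<dots> \<le> dirichlet E w w"
    using f(2) dirichlet_nonneg[of E w] mult_right_mono[of "dirichlet E f f" 1] by (simp add: energy_eq_dirichlet)
  finally show "z \<le> dirichlet E w w" .
qed

lemma unit_current_potential_uminus:
  assumes "unit_current_potential E a b w"
  shows "unit_current_potential E b a (\<lambda>x. - w x)"
  using assms finite_energy_scale[of E w "-1"] dirichlet_scale_right[of E _ "-1" w]
  by (simp add: unit_current_potential_def)

lemma unit_current_potential_add:
  assumes w: "unit_current_potential E a b w" and w': "unit_current_potential E b c w'"
  shows "unit_current_potential E a c (\<lambda>x. w x + w' x)"
  using w w' finite_energy_add[of E w w'] dirichlet_add_right[of E w w']
  by (simp add: unit_current_potential_def)

lemma eff_res_self: "eff_res E a a = 0"
  using eff_res_eq_dirichlet[OF unit_current_potential_zero] by (simp add: dirichlet_const_left)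

lemma eff_res_commute_if_potential:
  assumes "unit_current_potential E a b w"
  shows "eff_res E b a = eff_res E a b"
  using eff_res_eq_dirichlet[OF assms] eff_res_eq_dirichlet[OF unit_current_potential_uminus[OF assms]]
    dirichlet_scale_both[of E "-1" w] by simp

text \<open>Maximum principle: truncating \<open>w\<close> at its value at the source does not increase the energy,
  and by the representing property it cannot decrease it either; so the truncation differs from
  \<open>w\<close> by a function of energy zero, i.e.\ by a constant.\<close>

lemma unit_current_potential_le_source:
  assumes sg: "simple_graph E" and path: "E\<^sup>*\<^sup>* y a" and w: "unit_current_potential E a b w"
  shows "w y \<le> w a"
proof -
  define f where "f x = min (w x) (w a)" for x
  have wfe: "finite_energy E w" using w by (simp add: unit_current_potential_def)
  have grad_le: "(grad f p)\<^sup>2 \<le> (grad w p)\<^sup>2" for p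
    unfolding abs_le_square_iff[symmetric] by (auto simp: grad_def f_def min_def)
  have ffe: "finite_energy E f"
    using wfe unfolding finite_energy_iff
    by (rule summable_on_comparison_test) (auto intro: grad_le)
  have "w b \<le> w a"
    using unit_current_potential_self[OF w] dirichlet_nonneg[of E w] by simp
  then have "dirichlet E f w = dirichlet E w w"
    using w ffe unit_current_potential_self[OF w] by (simp add: unit_current_potential_def f_def)
  moreover have "dirichlet E f f \<le> dirichlet E w w"
    using ffe wfe grad_le unfolding dirichlet_def
    by (intro mult_left_mono infsum_mono) (auto simp: finite_energy_iff power2_eq_square)
  ultimately have "dirichlet E (\<lambda>x. f x + (-1) * w x) (\<lambda>x. f x + (-1) * w x) \<le> 0"
    unfolding dirichlet_expand[OF ffe wfe] by simp
  then have "dirichlet E (\<lambda>x. f x + (-1) * w x) (\<lambda>x. f x + (-1) * w x) = 0"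
    using dirichlet_nonneg by (rule antisym)
  from const_if_dirichlet_eq_0[OF sg finite_energy_add[OF ffe finite_energy_scale[OF wfe]] this path]
  have "w y = f y" by (simp add: f_def)
  then show ?thesis by (simp add: f_def)
qed

section \<open>Automorphisms\<close>

lemma graph_automorphism_inv:
  assumes "graph_automorphism E \<sigma>"
  shows "graph_automorphism E (inv \<sigma>)"
proof -
  have b: "bij \<sigma>" and e: "\<And>u v. E u v \<longleftrightarrow> E (\<sigma> u) (\<sigma> v)"
    using assms by (auto simp: graph_automorphism_def)
  have "\<sigma> (inv \<sigma> u) = u" for u by (rule surj_f_inv_f[OF bij_is_surj[OF b]])
  then show ?thesis unfolding graph_automorphism_def using bij_imp_bij_inv[OF b] e by metis
qed

lemma bij_betw_edges_automorphism:
  assumes \<sigma>: "graph_automorphism E \<sigma>"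
  shows "bij_betw (map_prod \<sigma> \<sigma>) (edges E) (edges E)"
proof (rule bij_betwI[where g = "map_prod (inv \<sigma>) (inv \<sigma>)"])
  have b: "bij \<sigma>" using \<sigma> by (simp add: graph_automorphism_def)
  show "map_prod \<sigma> \<sigma> \<in> edges E \<rightarrow> edges E"
    using \<sigma> by (auto simp: graph_automorphism_def edges_def)
  show "map_prod (inv \<sigma>) (inv \<sigma>) \<in> edges E \<rightarrow> edges E"
    using graph_automorphism_inv[OF \<sigma>] by (auto simp: graph_automorphism_def edges_def)
  show "map_prod (inv \<sigma>) (inv \<sigma>) (map_prod \<sigma> \<sigma> p) = p" for p
    by (cases p) (simp add: inv_f_f[OF bij_is_inj[OF b]])
  show "map_prod \<sigma> \<sigma> (map_prod (inv \<sigma>) (inv \<sigma>) p) = p" for p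
    by (cases p) (simp add: surj_f_inv_f[OF bij_is_surj[OF b]])
qed

lemma grad_comp: "grad (\<lambda>x. f (\<sigma> x)) p = grad f (map_prod \<sigma> \<sigma> p)"
  by (cases p) (simp add: grad_def)

lemma finite_energy_comp_automorphism:
  assumes "graph_automorphism E \<sigma>" "finite_energy E f"
  shows "finite_energy E (\<lambda>x. f (\<sigma> x))"
  using assms(2) summable_on_reindex_bij_betw[OF bij_betw_edges_automorphism[OF assms(1)], of "\<lambda>p. (grad f p)\<^sup>2"]
  by (simp add: finite_energy_iff grad_comp)

lemma dirichlet_comp_automorphism:
  assumes "graph_automorphism E \<sigma>"
  shows "dirichlet E (\<lambda>x. f (\<sigma> x)) (\<lambda>x. g (\<sigma> x)) = dirichlet E f g"
  using infsum_reindex_bij_betw[OF bij_betw_edges_automorphism[OF assms], of "\<lambda>p. grad f p * grad g p"]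
  by (simp add: dirichlet_def grad_comp)

lemma unit_current_potential_comp_automorphism:
  assumes \<sigma>: "graph_automorphism E \<sigma>" and w: "unit_current_potential E (\<sigma> a) (\<sigma> b) w"
  shows "unit_current_potential E a b (\<lambda>x. w (\<sigma> x))"
  unfolding unit_current_potential_def
proof (intro conjI allI impI)
  have b: "bij \<sigma>" using \<sigma> by (simp add: graph_automorphism_def)
  show "finite_energy E (\<lambda>x. w (\<sigma> x))"
    using w by (intro finite_energy_comp_automorphism[OF \<sigma>]) (simp add: unit_current_potential_def)
  fix f
  assume f: "finite_energy E f"
  have "dirichlet E f (\<lambda>x. w (\<sigma> x)) = dirichlet E (\<lambda>x. f (inv \<sigma> (\<sigma> x))) (\<lambda>x. w (\<sigma> x))"
    by (simp add: inv_f_f[OF bij_is_inj[OF b]])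
  also have "\<dots> = dirichlet E (\<lambda>x. f (inv \<sigma> x)) w"
    by (rule dirichlet_comp_automorphism[OF \<sigma>])
  also have "\<dots> = f a - f b"
    using w finite_energy_comp_automorphism[OF graph_automorphism_inv[OF \<sigma>] f]
    by (simp add: unit_current_potential_def inv_f_f[OF bij_is_inj[OF b]])
  finally show "dirichlet E f (\<lambda>x. w (\<sigma> x)) = f a - f b" .
qed

lemma neighbours_automorphism:
  assumes \<sigma>: "graph_automorphism E \<sigma>"
  shows "bij_betw \<sigma> (neighbours E x) (neighbours E (\<sigma> x))"
proof -
  have b: "bij \<sigma>" and e: "\<And>u v. E u v \<longleftrightarrow> E (\<sigma> u) (\<sigma> v)"
    using \<sigma> by (auto simp: graph_automorphism_def)
  have "\<sigma> ` neighbours E x = neighbours E (\<sigma> x)"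
  proof
    show "\<sigma> ` neighbours E x \<subseteq> neighbours E (\<sigma> x)" using e by (auto simp: neighbours_def)
    show "neighbours E (\<sigma> x) \<subseteq> \<sigma> ` neighbours E x"
      using e[of x] surj_f_inv_f[OF bij_is_surj[OF b]] by (auto simp: neighbours_def image_iff) metis
  qed
  then show ?thesis using bij_is_inj[OF b] by (auto simp: bij_betw_def inj_on_def)
qed

section \<open>Amenability\<close>

lemma sum_neighbours_inside_diff_eq_0:
  assumes sg: "simple_graph E" and fin: "\<And>x. finite (neighbours E x)" and V: "finite V"
  shows "(\<Sum>x\<in>V. \<Sum>j\<in>neighbours E x \<inter> V. h j - h x) = (0::real)"
proof -
  let ?P = "SIGMA x:V. neighbours E x \<inter> V"
  have swap: "bij_betw prod.swap ?P ?P"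
    using simple_graph_sym[OF sg] by (intro bij_betwI[where g = prod.swap]) (auto simp: neighbours_def)
  have "(\<Sum>x\<in>V. \<Sum>j\<in>neighbours E x \<inter> V. h j - h x) = (\<Sum>p\<in>?P. h (snd p) - h (fst p))"
    using V fin by (subst sum.Sigma) (auto simp: case_prod_unfold)
  also have "\<dots> = (\<Sum>p\<in>?P. h (snd p)) - (\<Sum>p\<in>?P. h (fst p))"
    by (rule sum_subtractf)
  also have "(\<Sum>p\<in>?P. h (snd p)) = (\<Sum>p\<in>?P. h (fst p))"
    using sum.reindex_bij_betw[OF swap, of "\<lambda>p. h (snd p)"] by simp
  finally show ?thesis by simp
qed

text \<open>Only edges leaving \<open>V\<close> contribute to the total Laplacian of \<open>h\<close> over \<open>V\<close>, and each
  boundary vertex has at most \<open>k\<close> of them.\<close>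

lemma abs_sum_laplacian_le_boundary:
  assumes sg: "simple_graph E" and fin: "\<And>x. finite (neighbours E x)" and V: "finite V"
    and deg: "\<And>x. card (neighbours E x) \<le> k"
    and lip: "\<And>x j. E x j \<Longrightarrow> h j - h x \<le> (1::real)"
  shows "\<bar>\<Sum>x\<in>V. \<Sum>j\<in>neighbours E x. h j - h x\<bar> \<le> real k * real (card (boundary E V))"
proof -
  have split: "(\<Sum>j\<in>neighbours E x. h j - h x)
      = (\<Sum>j\<in>neighbours E x \<inter> V. h j - h x) + (\<Sum>j\<in>neighbours E x - V. h j - h x)" for x
    using fin[of x] by (metis (no_types) Diff_disjoint Int_Diff_Un Int_Diff_disjoint finite_Diff finite_Int sum.union_disjoint)
  have out: "\<bar>\<Sum>j\<in>neighbours E x - V. h j - h x\<bar> \<le> (if x \<in> boundary E V then real k else 0)"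
    if "x \<in> V" for x
  proof (cases "x \<in> boundary E V")
    case True
    have "\<bar>\<Sum>j\<in>neighbours E x - V. h j - h x\<bar> \<le> (\<Sum>j\<in>neighbours E x - V. 1)"
      using lip simple_graph_sym[OF sg]
      by (intro order_trans[OF sum_abs sum_mono]) (fastforce simp: neighbours_def abs_le_iff)
    also have "\<dots> \<le> real (card (neighbours E x))"
      using fin[of x] by (simp add: card_mono)
    finally show ?thesis using True deg[of x] by simp
  next
    case False
    with that have "neighbours E x - V = {}" by (auto simp: boundary_def neighbours_def)
    then show ?thesis by (simp only: sum.empty) (simp add: False)
  qed
  have "\<bar>\<Sum>x\<in>V. \<Sum>j\<in>neighbours E x. h j - h x\<bar> = \<bar>\<Sum>x\<in>V. \<Sum>j\<in>neighbours E x - V. h j - h x\<bar>"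
    using sum_neighbours_inside_diff_eq_0[OF sg fin V, of h] by (simp add: split sum.distrib)
  also have "\<dots> \<le> (\<Sum>x\<in>V. if x \<in> boundary E V then real k else 0)"
    by (intro order_trans[OF sum_abs sum_mono] out)
  also have "\<dots> = real k * real (card (boundary E V))"
    using V by (simp add: sum.If_cases boundary_def Collect_conj_eq)
  finally show ?thesis .
qed

section \<open>Resistor networks\<close>

locale resistor_network =
  fixes E :: "'a \<Rightarrow> 'a \<Rightarrow> bool"
  assumes simple: "simple_graph E"
    and locally_finite: "\<And>x. finite (neighbours E x)"
    and connected: "\<And>x y. E\<^sup>*\<^sup>* x y"
begin

definition potential :: "'a \<Rightarrow> 'a \<Rightarrow> 'a \<Rightarrow> real" where
  "potential a b = (SOME w. unit_current_potential E a b w)"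

lemma unit_current_potential: "unit_current_potential E a b (potential a b)"
  unfolding potential_def using unit_current_potential_exists[OF simple locally_finite connected]
  by (rule someI_ex)

lemma finite_energy_potential: "finite_energy E (potential a b)"
  using unit_current_potential by (simp add: unit_current_potential_def)

lemma dirichlet_potential: "finite_energy E f \<Longrightarrow> dirichlet E f (potential a b) = f a - f b"
  using unit_current_potential by (simp add: unit_current_potential_def)

lemma eff_res_eq_dirichlet_potential: "eff_res E a b = dirichlet E (potential a b) (potential a b)"
  by (rule eff_res_eq_dirichlet[OF unit_current_potential])

lemma eff_res_commute: "eff_res E a b = eff_res E b a"
  by (rule eff_res_commute_if_potential[OF unit_current_potential, symmetric])

lemma eff_res_le_1_if_edge:
  assumes "E x y"
  shows "eff_res E x y \<le> 1"
proof -
  let ?R = "eff_res E x y"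
  have "?R\<^sup>2 \<le> ?R"
    using sq_diff_le_dirichlet_if_edge[OF simple finite_energy_potential assms, of x y]
    by (simp add: eff_res_eq_dirichlet_potential unit_current_potential_self[OF unit_current_potential])
  moreover have "0 \<le> ?R" by (simp add: eff_res_eq_dirichlet_potential dirichlet_nonneg)
  ultimately show ?thesis by (cases "?R = 0") (auto simp: power2_eq_square)
qed

text \<open>Series law: the potential of a unit current from \<open>j\<close> to \<open>v\<close> is that from \<open>j\<close> to
  \<open>x\<close> plus that from \<open>x\<close> to \<open>v\<close>.\<close>

lemma eff_res_expand:
  "eff_res E v j = eff_res E x j + 2 * (potential x v j - potential x v x) + eff_res E v x"
proof -
  have "unit_current_potential E j v (\<lambda>y. potential j x y + 1 * potential x v y)"
    using unit_current_potential_add[OF unit_current_potential unit_current_potential] by simp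
  then have "eff_res E j v = dirichlet E (\<lambda>y. potential j x y + 1 * potential x v y)
      (\<lambda>y. potential j x y + 1 * potential x v y)"
    by (rule eff_res_eq_dirichlet)
  also have "\<dots> = eff_res E j x + 2 * dirichlet E (potential j x) (potential x v) + eff_res E x v"
    by (simp only: dirichlet_expand[OF finite_energy_potential finite_energy_potential])
      (simp add: eff_res_eq_dirichlet_potential)
  finally have "eff_res E j v = eff_res E j x + 2 * dirichlet E (potential j x) (potential x v) + eff_res E x v" .
  moreover have "dirichlet E (potential j x) (potential x v) = potential x v j - potential x v x"
    using dirichlet_potential[OF finite_energy_potential, of x v j x] by (simp add: dirichlet_commute)
  ultimately show ?thesis using eff_res_commute[of j v] eff_res_commute[of j x] eff_res_commute[of x v] by simp
qed

lemma eff_res_diff_le_1_if_edge: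
  assumes "E x j"
  shows "eff_res E v j - eff_res E v x \<le> 1"
  using eff_res_expand[of v j x] eff_res_le_1_if_edge[of x j] assms
    unit_current_potential_le_source[OF simple connected[of j x] unit_current_potential[of x v]]
  by simp

lemma sum_eff_res_neighbours:
  "(\<Sum>j\<in>neighbours E x. eff_res E v j)
    = real (card (neighbours E x)) * eff_res E v x + (\<Sum>j\<in>neighbours E x. eff_res E x j) - 2 + 2 * of_bool (x = v)"
proof -
  let ?w = "potential x v"
  have "(\<Sum>j\<in>neighbours E x. ?w j - ?w x) = - dirichlet E ?w (indicator {x})"
    by (simp add: dirichlet_indicator[OF simple locally_finite] sum_negf[symmetric])
  also have "\<dots> = - (indicator {x} x - indicator {x} v)"
    using dirichlet_potential[OF finite_energy_indicator[OF simple locally_finite], of x x v]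
    by (simp add: dirichlet_commute)
  finally have flux: "(\<Sum>j\<in>neighbours E x. ?w j - ?w x) = of_bool (x = v) - 1" by simp
  have "(\<Sum>j\<in>neighbours E x. eff_res E v j)
      = (\<Sum>j\<in>neighbours E x. eff_res E x j + 2 * (?w j - ?w x) + eff_res E v x)"
    by (rule sum.cong[OF refl eff_res_expand])
  also have "\<dots> = (\<Sum>j\<in>neighbours E x. eff_res E x j) + 2 * (\<Sum>j\<in>neighbours E x. ?w j - ?w x)
      + real (card (neighbours E x)) * eff_res E v x"
    by (simp add: sum.distrib sum_distrib_left)
  finally show ?thesis unfolding flux by simp
qed

lemma eff_res_automorphism:
  assumes "graph_automorphism E \<sigma>"
  shows "eff_res E (\<sigma> a) (\<sigma> b) = eff_res E a b"
  using eff_res_eq_dirichlet[OF unit_current_potential_comp_automorphism[OF assms unit_current_potential]]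
  by (simp add: dirichlet_comp_automorphism[OF assms] eff_res_eq_dirichlet_potential)

lemma sum_eff_res_neighbours_automorphism:
  assumes "graph_automorphism E \<sigma>"
  shows "(\<Sum>j\<in>neighbours E (\<sigma> x). eff_res E (\<sigma> x) j) = (\<Sum>j\<in>neighbours E x. eff_res E x j)"
  using sum.reindex_bij_betw[OF neighbours_automorphism[OF assms], of "eff_res E (\<sigma> x)"]
  by (simp add: eff_res_automorphism[OF assms])

text \<open>Foster's theorem for amenable transitive graphs: summing the Laplacian \<open>S - 2\<close> of
  \<open>eff_res E v\<close> over a F{\o}lner set \<open>V\<close> avoiding \<open>v\<close> gives \<open>\<bar>S - 2\<bar> |V| \<le> k |\<partial>V|\<close>.\<close>

lemma sum_eff_res_neighbours_eq_2:
  assumes vt: "vertex_transitive E" and inf: "infinite (UNIV :: 'a set)" and sm: "smallish E"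
    and deg: "\<And>x. card (neighbours E x) = k"
  shows "(\<Sum>j\<in>neighbours E x. eff_res E x j) = 2"
proof -
  let ?S = "\<lambda>x. \<Sum>j\<in>neighbours E x. eff_res E x j"
  have S: "?S y = ?S x" for y
    using vt sum_eff_res_neighbours_automorphism unfolding vertex_transitive_def by metis
  obtain V :: "nat \<Rightarrow> 'a set" where V: "\<And>m. finite (V m) \<and> V m \<noteq> {}"
    and folner: "(\<lambda>m. real (card (boundary E (V m))) / real (card (V m))) \<longlonglongrightarrow> 0"
    using sm unfolding smallish_def by blast
  have "\<bar>?S x - 2\<bar> \<le> real k * (real (card (boundary E (V m))) / real (card (V m)))" for m
  proof -
    have pos: "0 < real (card (V m))" using V[of m] by (simp add: card_gt_0_iff)
    obtain v where v: "v \<notin> V m" using ex_new_if_finite[OF inf] V by blast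
    have "(\<Sum>j\<in>neighbours E y. eff_res E v j - eff_res E v y) = ?S x - 2" if "y \<in> V m" for y
      using sum_eff_res_neighbours[of v y] that v S[of y] deg[of y] by (auto simp: sum_subtractf)
    then have "real (card (V m)) * \<bar>?S x - 2\<bar>
        = \<bar>\<Sum>y\<in>V m. \<Sum>j\<in>neighbours E y. eff_res E v j - eff_res E v y\<bar>"
      by (simp add: abs_mult)
    also have "\<dots> \<le> real k * real (card (boundary E (V m)))"
      using V[of m] deg eff_res_diff_le_1_if_edge
      by (intro abs_sum_laplacian_le_boundary[OF simple locally_finite]) auto
    finally show ?thesis using pos by (simp add: field_simps)
  qed
  moreover have "(\<lambda>m. real k * (real (card (boundary E (V m))) / real (card (V m)))) \<longlonglongrightarrow> real k * 0"
    by (intro tendsto_intros folner)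
  ultimately have "\<bar>?S x - 2\<bar> \<le> real k * 0"
    by (intro tendsto_le[OF trivial_limit_sequentially _ tendsto_const]) auto
  then show ?thesis by simp
qed

end

section \<open>Walk sums\<close>

lemma walks_0: "walks E v 0 = {[v]}"
  by (auto simp: walks_def length_Suc_conv)

lemma last_walk:
  assumes "ws \<in> walks E v r"
  shows "last ws = ws ! r"
proof -
  have "length ws = Suc r" using assms by (simp add: walks_def)
  moreover from this have "ws \<noteq> []" by auto
  ultimately show ?thesis by (simp add: last_conv_nth)
qed

lemma walks_Suc:
  "walks E v (Suc r) = (\<lambda>(ws, j). ws @ [j]) ` (SIGMA ws:walks E v r. neighbours E (last ws))"
proof (intro equalityI subsetI)
  fix xs
  assume "xs \<in> (\<lambda>(ws, j). ws @ [j]) ` (SIGMA ws:walks E v r. neighbours E (last ws))"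
  then obtain ws j where xs: "xs = ws @ [j]" and ws: "ws \<in> walks E v r" and j: "E (last ws) j"
    by (auto simp: neighbours_def)
  have "E ((ws @ [j]) ! i) ((ws @ [j]) ! Suc i)" if "i < Suc r" for i
    using ws j that last_walk[OF ws] by (cases "i < r") (auto simp: walks_def nth_append less_Suc_eq)
  then show "xs \<in> walks E v (Suc r)"
    using ws by (auto simp: xs walks_def nth_append)
next
  fix xs
  assume xs: "xs \<in> walks E v (Suc r)"
  then have len: "length xs = Suc (Suc r)" by (simp add: walks_def)
  have walk: "butlast xs \<in> walks E v r"
    using xs by (auto simp: walks_def nth_butlast)
  moreover have "E (last (butlast xs)) (last xs)"
  proof -
    have "E (xs ! r) (xs ! Suc r)" using xs by (simp add: walks_def)
    moreover have "xs \<noteq> []" using len by auto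
    ultimately show ?thesis using last_walk[OF walk] len by (simp add: nth_butlast last_conv_nth)
  qed
  moreover have "xs = butlast xs @ [last xs]" using len by (metis append_butlast_last_id list.size(3) nat.distinct(1))
  ultimately show "xs \<in> (\<lambda>(ws, j). ws @ [j]) ` (SIGMA ws:walks E v r. neighbours E (last ws))"
    by (auto simp: neighbours_def image_iff intro!: bexI[of _ "(butlast xs, last xs)"])
qed

lemma finite_walks:
  assumes "\<And>x. finite (neighbours E x)"
  shows "finite (walks E v r)"
  using assms by (induction r) (auto simp: walks_0 walks_Suc)

lemma sum_walks_Suc:
  assumes fin: "\<And>x. finite (neighbours E x)"
  shows "(\<Sum>ws\<in>walks E v (Suc r). \<phi> (last ws)) = (\<Sum>ws\<in>walks E v r. \<Sum>j\<in>neighbours E (last ws). \<phi> j)"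
proof -
  have "inj_on (\<lambda>(ws, j). ws @ [j]) (SIGMA ws:walks E v r. neighbours E (last ws))"
    by (auto simp: inj_on_def)
  then show ?thesis
    using finite_walks[OF fin] fin
    by (simp add: walks_Suc sum.reindex sum.Sigma case_prod_unfold)
qed

lemma sum_walks_Suc_harmonic:
  assumes fin: "\<And>x. finite (neighbours E x)"
    and lap: "\<And>x. (\<Sum>j\<in>neighbours E x. \<phi> j) = real k * \<phi> x + 2 * of_bool (x = v)"
  shows "(\<Sum>ws\<in>walks E v (Suc r). \<phi> (last ws))
    = real k * (\<Sum>ws\<in>walks E v r. \<phi> (last ws)) + 2 * real (closed_walks_count E v r)"
proof -
  have count: "(\<Sum>ws\<in>walks E v r. 2 * of_bool (last ws = v)) = 2 * real (closed_walks_count E v r)"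
    unfolding sum_distrib_left[symmetric] using finite_walks[OF fin]
    by (simp add: closed_walks_count_def of_bool_def sum.If_cases Int_def)
  show ?thesis
    by (simp add: sum_walks_Suc[OF fin] lap sum.distrib sum_distrib_left count)
qed

lemma sum_walks_closed_form:
  assumes fin: "\<And>x. finite (neighbours E x)" and k: "0 < k"
    and lap: "\<And>x. (\<Sum>j\<in>neighbours E x. \<phi> j) = real k * \<phi> x + 2 * of_bool (x = v)"
    and zero: "\<phi> v = 0"
  shows "(\<Sum>ws\<in>walks E v (Suc r). \<phi> (last ws))
    = 2 * real k ^ r * (\<Sum>s<Suc r. real (closed_walks_count E v s) / real k ^ s)"
proof (induction r)
  case 0
  show ?case by (simp add: sum_walks_Suc_harmonic[OF fin lap] walks_0 zero)
next
  case (Suc r)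
  with k show ?case by (simp add: sum_walks_Suc_harmonic[OF fin lap, of "Suc r"] field_simps)
qed

lemma regular_degree_pos:
  fixes E :: "'a \<Rightarrow> 'a \<Rightarrow> bool"
  assumes inf: "infinite (UNIV :: 'a set)" and conn: "connected_graph E" and reg: "regular_graph E k"
  shows "0 < k"
proof (rule ccontr)
  assume "\<not> 0 < k"
  with reg have "finite {u. E x u} \<and> card {u. E x u} = 0" for x by (simp add: regular_graph_def)
  then have no_edge: "\<not> E x y" for x y by (metis (mono_tags) card_0_eq empty_iff mem_Collect_eq)
  have "x = y" for x y :: 'a
    using conn[unfolded connected_graph_def, rule_format, of x y]
    by (induction rule: rtranclp_induct) (auto simp: no_edge)
  then have "UNIV = {undefined :: 'a}" by auto
  with inf show False by (metis finite.emptyI finite_insert)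
qed

theorem theorem2:
  fixes E :: "'a \<Rightarrow> 'a \<Rightarrow> bool" and k :: nat and v :: 'a and r :: nat
  assumes "infinite (UNIV :: 'a set)"
    and "simple_graph E"
    and "connected_graph E"
    and "vertex_transitive E"
    and "smallish E"
    and "regular_graph E k"
    and "r > 0"
  shows "(\<Sum>ws\<in>walks E v r. eff_res E v (last ws))
         = 2 * real k ^ (r - 1) * (\<Sum>s<r. real (closed_walks_count E v s) / real k ^ s)"
proof -
  have fin: "\<And>x. finite (neighbours E x)" and deg: "\<And>x. card (neighbours E x) = k"
    using assms(6) by (auto simp: regular_graph_def neighbours_def)
  interpret resistor_network E
    using assms(2,3) fin by unfold_locales (auto simp: connected_graph_def)
  have "(\<Sum>j\<in>neighbours E x. eff_res E v j) = real k * eff_res E v x + 2 * of_bool (x = v)" for x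
    using sum_eff_res_neighbours[of v x] sum_eff_res_neighbours_eq_2[OF assms(4,1,5) deg] deg by simp
  from sum_walks_closed_form[OF fin regular_degree_pos[OF assms(1,3,6)] this eff_res_self, of "r - 1"]
  show ?thesis using \<open>r > 0\<close> by simp
qed

end
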